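(* Let $\hat\gamma,\lambda,\Gamma,a,b,\tau,\mu_f>0$ with $a>b$, $a+b<1$, $2a+3b<2$, $\Gamma\ge1$ and $\Gamma\ge\big(\frac{4}{\hat\gamma\lambda\mu_f\tau}\big)^{1/(1-a-b)}$. Define $\hat\gamma_k=\hat\gamma/(k+\Gamma)^a$, $\lambda_k=\lambda/(k+\Gamma)^b$ and $\Lambda_k=|1-\lambda_{k+1}/\lambda_k|$ for $k\ge0$. Suppose moreover that there are numbers $\gamma_{i,k}\ge0$ ($i\in[m]$, $k\ge0$) with $\max_j\gamma_{j,k}=\hat\gamma_k$, nonnegative vectors $u,v\in\mathbb{R}^m$ and $\theta>0$ with $\frac1m\sum_iu_i\gamma_{i,k}v_i\ge\theta\hat\gamma_k$ for all $k\ge0$. Then: (i) $(\lambda_k)$ is a strictly positive decreasing sequence with $\lambda_k\to0$, and $(\hat\gamma_k)$ is a strictly positive decreasing sequence with $\hat\gamma_k\to0$ and $\hat\gamma_k/\lambda_k\to0$; (ii) $\Lambda_k/\lambda_k\to0$, $\Lambda_{k+1}\le\Lambda_k$ for all $k\ge0$, and $\Lambda_{k-1}\le\frac1{k+\Gamma}$ for all $k\ge1$; (iii) for all $k\ge1$, $\dfrac{(k+\Gamma)\hat\gamma_k\lambda_k}{(k+\Gamma-1)\hat\gamma_{k-1}\lambda_{k-1}}\le1+0.5\mu_f\hat\gamma_k\lambda_k\tau$. *)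

theory Defs
  imports "HOL-Analysis.Analysis"
begin

definition poly_step :: "real \<Rightarrow> real \<Rightarrow> real \<Rightarrow> nat \<Rightarrow> real" where
  "poly_step c G e k = c / (real k + G) powr e"

definition rel_change :: "(nat \<Rightarrow> real) \<Rightarrow> nat \<Rightarrow> real" where
  "rel_change l k = \<bar>1 - l (Suc k) / l k\<bar>"

end

theory Submission
  imports Defs
begin

(* Everything reduces to the shifted index x_k = k + Gamma: products and quotients of the step
   sizes are again of the form c / x_k^e; the relative change of lambda_k is
   1 - (x_k / (x_k + 1))^b <= 1 / (x_k + 1), since t^b >= t for 0 < t <= 1 and b <= 1; and
   the growth ratio in (iii) is (x_k / (x_k - 1))^(1-a-b) <= 1 + 2 / x_k, which the lower bound
   on Gamma makes at most 1 + mu_f tau gamma_k lambda_k / 2. *)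

lemma poly_step_eq_mult_powr:
  "G > 0 \<Longrightarrow> poly_step c G e k = c * (real k + G) powr (- e)"
  by (simp add: poly_step_def powr_minus divide_inverse)

lemma poly_step_pos: "c > 0 \<Longrightarrow> G > 0 \<Longrightarrow> poly_step c G e k > 0"
  by (simp add: poly_step_def)

lemma poly_step_divide:
  "G > 0 \<Longrightarrow> poly_step c G e k / poly_step d G f k = poly_step (c / d) G (e - f) k"
  by (simp add: poly_step_eq_mult_powr powr_diff powr_minus field_simps)

lemma scaled_poly_step_product:
  "G > 0 \<Longrightarrow> (real k + G) * poly_step c G e k * poly_step d G f k
     = c * d * (real k + G) powr (1 - e - f)"
  by (simp add: poly_step_def powr_diff powr_add field_simps)

lemma decseq_poly_step:
  assumes "c \<ge> 0" "G > 0" "e \<ge> 0"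
  shows "decseq (poly_step c G e)"
proof (rule antimonoI)
  fix m n :: nat
  assume "m \<le> n"
  then have "(real m + G) powr e \<le> (real n + G) powr e"
    using assms by (intro powr_mono2) auto
  then show "poly_step c G e n \<le> poly_step c G e m"
    unfolding poly_step_def using assms by (intro divide_left_mono) auto
qed

lemma poly_step_tendsto_zero:
  assumes "G > 0" "e > 0"
  shows "poly_step c G e \<longlonglongrightarrow> 0"
proof -
  have "filterlim (\<lambda>k. real k + G) at_top sequentially"
    by (subst add.commute)
      (rule filterlim_tendsto_add_at_top[OF tendsto_const filterlim_real_sequentially])
  then have "(\<lambda>k. (real k + G) powr (- e)) \<longlonglongrightarrow> 0"
    using assms by (intro tendsto_neg_powr) auto
  then have "(\<lambda>k. c * (real k + G) powr (- e)) \<longlonglongrightarrow> 0"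
    by (rule tendsto_mult_right_zero)
  moreover have "poly_step c G e = (\<lambda>k. c * (real k + G) powr (- e))"
    using assms by (simp add: fun_eq_iff poly_step_eq_mult_powr)
  ultimately show ?thesis
    by simp
qed

lemma rel_change_poly_step:
  assumes "c \<noteq> 0" "G > 0" "e \<ge> 0"
  shows "rel_change (poly_step c G e) k = 1 - ((real k + G) / (real k + G + 1)) powr e"
proof -
  have x: "real k + G > 0"
    using assms by simp
  have "poly_step c G e (Suc k) / poly_step c G e k = ((real k + G) / (real k + G + 1)) powr e"
    using assms x by (simp add: poly_step_def powr_divide add_ac)
  moreover have "((real k + G) / (real k + G + 1)) powr e \<le> 1"
    using x assms by (intro powr_le1) auto
  ultimately show ?thesis
    unfolding rel_change_def by simp
qed

lemma rel_change_poly_step_le: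
  assumes "c \<noteq> 0" "G > 0" "0 \<le> e" "e \<le> 1"
  shows "rel_change (poly_step c G e) k \<le> 1 / (real k + G + 1)"
proof -
  define x where "x = real k + G"
  have x: "x > 0"
    using assms by (simp add: x_def)
  have "(x / (x + 1)) powr 1 \<le> (x / (x + 1)) powr e"
    using x assms by (intro powr_mono') auto
  moreover have "x / (x + 1) = 1 - 1 / (x + 1)"
    using x by (simp add: field_simps)
  ultimately show ?thesis
    using x by (simp add: rel_change_poly_step[OF assms(1-3)] x_def)
qed

lemma rel_change_poly_step_Suc_le:
  assumes "c \<noteq> 0" "G > 0" "e \<ge> 0"
  shows "rel_change (poly_step c G e) (Suc k) \<le> rel_change (poly_step c G e) k"
proof -
  define x where "x = real k + G"
  have "(x / (x + 1)) powr e \<le> ((x + 1) / (x + 1 + 1)) powr e"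
    using assms by (intro powr_mono2) (auto simp: x_def field_simps)
  then show ?thesis
    by (simp add: rel_change_poly_step[OF assms(1-3)] x_def add_ac)
qed

lemma rel_change_poly_step_divide_le:
  assumes "c > 0" "G > 0" "0 \<le> e" "e \<le> 1"
  shows "rel_change (poly_step c G e) k / poly_step c G e k \<le> poly_step (1 / c) G (1 - e) k"
proof -
  have "rel_change (poly_step c G e) k / poly_step c G e k
      \<le> (1 / (real k + G + 1)) / poly_step c G e k"
    using assms less_imp_le[OF poly_step_pos[OF assms(1,2)]]
    by (intro divide_right_mono rel_change_poly_step_le) auto
  also have "\<dots> \<le> (1 / (real k + G)) / poly_step c G e k"
    using assms less_imp_le[OF poly_step_pos[OF assms(1,2)]]
    by (intro divide_right_mono divide_left_mono) auto
  also have "\<dots> = poly_step (1 / c) G (1 - e) k"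
    using assms by (simp add: poly_step_def powr_diff)
  finally show ?thesis .
qed

lemma rel_change_poly_step_divide_tendsto_zero:
  assumes "c > 0" "G > 0" "0 \<le> e" "e < 1"
  shows "(\<lambda>k. rel_change (poly_step c G e) k / poly_step c G e k) \<longlonglongrightarrow> 0"
proof (rule tendsto_sandwich)
  show "\<forall>\<^sub>F k in sequentially. 0 \<le> rel_change (poly_step c G e) k / poly_step c G e k"
    using poly_step_pos[OF assms(1,2)]
    by (intro always_eventually allI divide_nonneg_pos) (auto simp: rel_change_def)
  show "\<forall>\<^sub>F k in sequentially.
      rel_change (poly_step c G e) k / poly_step c G e k \<le> poly_step (1 / c) G (1 - e) k"
    using assms by (intro always_eventually allI rel_change_poly_step_divide_le) auto
  show "poly_step (1 / c) G (1 - e) \<longlonglongrightarrow> 0"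
    using assms by (intro poly_step_tendsto_zero) auto
qed simp

lemma powr_ratio_le:
  fixes x c :: real
  assumes "x \<ge> 2" "0 < c" "c \<le> 1"
  shows "(x / (x - 1)) powr c \<le> 1 + 2 / x"
proof -
  have "(x / (x - 1)) powr c \<le> (x / (x - 1)) powr 1"
    using assms by (intro powr_mono) auto
  also have "\<dots> = 1 + 1 / (x - 1)"
    using assms by (simp add: field_simps)
  also have "\<dots> \<le> 1 + 2 / x"
    using assms by (simp add: field_simps)
  finally show ?thesis .
qed

lemma le_powr_of_powr_inverse_le:
  fixes x y c :: real
  assumes "y \<ge> 0" "c > 0" "y powr (1 / c) \<le> x"
  shows "y \<le> x powr c"
proof -
  have "y = (y powr (1 / c)) powr c"
    using assms by (simp add: powr_powr)
  also have "\<dots> \<le> x powr c"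
    using assms by (intro powr_mono2) auto
  finally show ?thesis .
qed

lemma step_product_growth_le:
  fixes gh lam G a b tau mu :: real
  assumes pos: "gh > 0" "lam > 0" "tau > 0" "mu > 0" "a > 0" "b > 0"
    and ab: "a + b < 1"
    and G1: "G \<ge> 1"
    and G2: "G \<ge> (4 / (gh * lam * mu * tau)) powr (1 / (1 - a - b))"
    and k: "k \<ge> 1"
  shows "((real k + G) * poly_step gh G a k * poly_step lam G b k)
           / ((real k + G - 1) * poly_step gh G a (k - 1) * poly_step lam G b (k - 1))
         \<le> 1 + (1/2) * mu * poly_step gh G a k * poly_step lam G b k * tau"
proof -
  define x where "x = real k + G"
  define c where "c = 1 - a - b"
  define K where "K = gh * lam * mu * tau"
  have x2: "x \<ge> 2" and c: "0 < c" "c \<le> 1" and K: "K > 0"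
    using k G1 ab pos by (auto simp: x_def c_def K_def)
  have num: "x * poly_step gh G a k * poly_step lam G b k = gh * lam * x powr c"
    using G1 by (simp add: scaled_poly_step_product x_def c_def)
  have "real (k - 1) + G = x - 1"
    using k by (simp add: x_def)
  then have den: "(x - 1) * poly_step gh G a (k - 1) * poly_step lam G b (k - 1)
      = gh * lam * (x - 1) powr c"
    using scaled_poly_step_product[of G "k - 1" gh a lam b] G1 by (simp add: c_def)
  have "((real k + G) * poly_step gh G a k * poly_step lam G b k)
           / ((real k + G - 1) * poly_step gh G a (k - 1) * poly_step lam G b (k - 1))
         = (x / (x - 1)) powr c"
    unfolding x_def[symmetric] num den using pos x2 by (simp add: powr_divide)
  also have "\<dots> \<le> 1 + 2 / x"
    using x2 c by (rule powr_ratio_le)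
  also have "\<dots> \<le> 1 + (K / 2) * x powr c / x"
  proof -
    have "4 \<le> K * x powr c"
      using le_powr_of_powr_inverse_le[of "4 / K" c x] G2 K c x2
      by (simp add: K_def c_def x_def field_simps)
    then show ?thesis
      using x2 by (simp add: field_simps)
  qed
  also have "\<dots> = 1 + (1/2) * mu * poly_step gh G a k * poly_step lam G b k * tau"
    using num x2 by (simp add: K_def field_simps)
  finally show ?thesis .
qed

theorem lemma1:
  fixes gh lam G a b tau mu_f theta :: real
    and m :: nat
    and gam :: "nat \<Rightarrow> nat \<Rightarrow> real"
    and u v :: "nat \<Rightarrow> real"
  assumes pos: "gh > 0" "lam > 0" "G > 0" "a > 0" "b > 0" "tau > 0" "mu_f > 0"
    and ab: "a > b" "a + b < 1" "2 * a + 3 * b < 2"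
    and G1: "G \<ge> 1"
    and G2: "G \<ge> (4 / (gh * lam * mu_f * tau)) powr (1 / (1 - a - b))"
    and m_pos: "m \<ge> 1"
    and gam_nonneg: "\<And>i k. i \<in> {1..m} \<Longrightarrow> gam i k \<ge> 0"
    and gam_max: "\<And>k. Max ((\<lambda>j. gam j k) ` {1..m}) = poly_step gh G a k"
    and uv: "\<And>i. i \<in> {1..m} \<Longrightarrow> u i \<ge> 0 \<and> v i \<ge> 0"
    and theta: "theta > 0"
    and lower: "\<And>k. (1 / real m) * (\<Sum>i\<in>{1..m}. u i * gam i k * v i)
                   \<ge> theta * poly_step gh G a k"
  shows "(\<forall>k. poly_step lam G b k > 0) \<and> decseq (poly_step lam G b)
           \<and> poly_step lam G b \<longlonglongrightarrow> 0
         \<and> (\<forall>k. poly_step gh G a k > 0) \<and> decseq (poly_step gh G a)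
           \<and> poly_step gh G a \<longlonglongrightarrow> 0
           \<and> (\<lambda>k. poly_step gh G a k / poly_step lam G b k) \<longlonglongrightarrow> 0
         \<and> (\<lambda>k. rel_change (poly_step lam G b) k / poly_step lam G b k) \<longlonglongrightarrow> 0
         \<and> (\<forall>k. rel_change (poly_step lam G b) (Suc k) \<le> rel_change (poly_step lam G b) k)
         \<and> (\<forall>k\<ge>1. rel_change (poly_step lam G b) (k - 1) \<le> 1 / (real k + G))
         \<and> (\<forall>k\<ge>1. ((real k + G) * poly_step gh G a k * poly_step lam G b k)
                  / ((real k + G - 1) * poly_step gh G a (k - 1) * poly_step lam G b (k - 1))
                \<le> 1 + (1/2) * mu_f * poly_step gh G a k * poly_step lam G b k * tau)"
proof -
  have "(\<lambda>k. poly_step gh G a k / poly_step lam G b k) = poly_step (gh / lam) G (a - b)"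
    using pos by (simp add: poly_step_divide)
  then have ratio: "(\<lambda>k. poly_step gh G a k / poly_step lam G b k) \<longlonglongrightarrow> 0"
    using pos ab by (simp add: poly_step_tendsto_zero)
  have rel_change_prev: "rel_change (poly_step lam G b) (k - 1) \<le> 1 / (real k + G)"
    if "k \<ge> 1" for k
    using rel_change_poly_step_le[of lam G b "k - 1"] that pos ab by simp
  have growth: "((real k + G) * poly_step gh G a k * poly_step lam G b k)
      / ((real k + G - 1) * poly_step gh G a (k - 1) * poly_step lam G b (k - 1))
      \<le> 1 + (1/2) * mu_f * poly_step gh G a k * poly_step lam G b k * tau" if "k \<ge> 1" for k
    using step_product_growth_le[OF pos(1,2,6,7,4,5) ab(2) G1 G2 that] .
  show ?thesis
    using pos ab ratio rel_change_prev growth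
    by (simp add: poly_step_pos decseq_poly_step poly_step_tendsto_zero
        rel_change_poly_step_divide_tendsto_zero rel_change_poly_step_Suc_le)
qed

end
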